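(* Let $\lambda\in\hat U(N)$ be a signature and $q\in\mathbb{R}$. Then \[ m_{N,PP(q)}[\lambda]=\frac1N\sum_{i=1}^N\Big(\prod_{j\ne i}\frac{(\lambda_i-i)-(\lambda_j-j)-q}{(\lambda_i-i)-(\lambda_j-j)}\Big)\delta\Big(\frac{\lambda_i+N-i}{N}\Big) \] is a signed measure of total mass $1$, and for $q\in[-1,1]$ it is a probability measure.
   Context: A signature of length $N$ is a tuple $\lambda=(\lambda_1\ge\dots\ge\lambda_N)\in\mathbb{Z}^N$; $\hat U(N)$ is the set of such signatures. $\delta(x)$ denotes the Dirac measure at $x$. *)

theory Defs
  imports "HOL-Probability.Probability"
begin

text \<open>A signature of length N: a non-increasing integer tuple
  (lambda_1 >= ... >= lambda_N), encoded as a function on the indices 1..N.\<close>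
definition signature :: "nat \<Rightarrow> (nat \<Rightarrow> int) \<Rightarrow> bool" where
  "signature N lam \<longleftrightarrow> (\<forall>i j. 1 \<le> i \<and> i \<le> j \<and> j \<le> N \<longrightarrow> lam j \<le> lam i)"

definition shifted :: "(nat \<Rightarrow> int) \<Rightarrow> nat \<Rightarrow> real" where
  "shifted lam i = real_of_int (lam i) - real i"

definition pp_weight :: "nat \<Rightarrow> real \<Rightarrow> (nat \<Rightarrow> int) \<Rightarrow> nat \<Rightarrow> real" where
  "pp_weight N q lam i =
     (\<Prod>j\<in>{1..N} - {i}. (shifted lam i - shifted lam j - q) / (shifted lam i - shifted lam j))"

definition pp_atom :: "nat \<Rightarrow> (nat \<Rightarrow> int) \<Rightarrow> nat \<Rightarrow> real" where
  "pp_atom N lam i = (real_of_int (lam i) + real N - real i) / real N"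

definition m_PP :: "nat \<Rightarrow> real \<Rightarrow> (nat \<Rightarrow> int) \<Rightarrow> real set \<Rightarrow> real" where
  "m_PP N q lam A = (1 / real N) * (\<Sum>i=1..N. pp_weight N q lam i * indicator A (pp_atom N lam i))"

end

theory Submission
  imports Defs
begin

text \<open>The weights are the terms of the divided difference, over the nodes
  x_j = lambda_j - j, of the monic polynomial P(z) = prod_j (z - x_j - q): since
  P(x_i) = -q prod_(j ~= i) (x_i - x_j - q), that divided difference is -q times the
  total weight. On the other hand the divided difference of a monic polynomial of degree
  N over N nodes is the sum of the nodes minus the sum of the roots, which is -N q;
  hence the weights sum to N. For integer signatures the nodes are distinct integers, so
  |x_i - x_j| >= 1 and every factor is nonnegative once |q| <= 1.\<close>

definition divided_difference :: "('i \<Rightarrow> real) \<Rightarrow> 'i set \<Rightarrow> (real \<Rightarrow> real) \<Rightarrow> real" where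
  "divided_difference x S f = (\<Sum>i\<in>S. f (x i) / (\<Prod>j\<in>S - {i}. x i - x j))"

lemma divided_difference_linear:
  "divided_difference x S (\<lambda>z. c * f z + d * g z) =
     c * divided_difference x S f + d * divided_difference x S g"
  unfolding divided_difference_def by (simp add: sum.distrib sum_distrib_left add_divide_distrib)

lemma divided_difference_mult_node_factor:
  assumes "finite S" "inj_on x S" "a \<in> S"
  shows "divided_difference x S (\<lambda>z. (z - x a) * f z) = divided_difference x (S - {a}) f"
proof -
  have "divided_difference x S (\<lambda>z. (z - x a) * f z) =
      (\<Sum>i\<in>S - {a}. (x i - x a) * f (x i) / (\<Prod>j\<in>S - {i}. x i - x j))"
    unfolding divided_difference_def using assms by (simp add: sum.remove)
  also have "\<dots> = (\<Sum>i\<in>S - {a}. f (x i) / (\<Prod>j\<in>S - {a} - {i}. x i - x j))"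
  proof (rule sum.cong)
    fix i assume i: "i \<in> S - {a}"
    have "x i - x a \<noteq> 0" using i assms inj_onD[OF assms(2)] by force
    moreover have "(\<Prod>j\<in>S - {i}. x i - x j) = (x i - x a) * (\<Prod>j\<in>S - {i} - {a}. x i - x j)"
      using i assms by (subst prod.remove[of _ a]) auto
    moreover have "S - {i} - {a} = S - {a} - {i}" by blast
    ultimately show "(x i - x a) * f (x i) / (\<Prod>j\<in>S - {i}. x i - x j) =
        f (x i) / (\<Prod>j\<in>S - {a} - {i}. x i - x j)" by simp
  qed simp
  finally show ?thesis unfolding divided_difference_def .
qed

lemma divided_difference_const_one:
  assumes "finite S" "inj_on x S"
  shows "divided_difference x S (\<lambda>z. 1) = (if card S = 1 then 1 else 0)"
  using assms
proof (induction "card S" arbitrary: S rule: less_induct)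
  case less
  show ?case
  proof (cases "card S \<le> 1")
    case True
    then have "S = {} \<or> (\<exists>a. S = {a})"
      using less.prems(1) card_1_singletonE by (cases "card S") auto
    then show ?thesis by (auto simp: divided_difference_def)
  next
    case False
    then obtain a b where ab: "a \<in> S" "b \<in> S" "a \<noteq> b"
      using card_le_Suc0_iff_eq[OF less.prems(1)] by auto
    have "x b - x a \<noteq> 0" using ab less.prems(2) inj_onD by fastforce
    have smaller: "card (S - {a}) < card S" "card (S - {b}) < card S"
      using card_Diff1_less[OF less.prems(1)] ab by auto
    have "divided_difference x (S - {a}) (\<lambda>z. 1) = divided_difference x (S - {b}) (\<lambda>z. 1)"
      using less.hyps[OF smaller(1) _ inj_on_diff] less.hyps[OF smaller(2) _ inj_on_diff]
        less.prems ab by simp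
    moreover have "divided_difference x S (\<lambda>z. 1 * ((z - x a) * 1) + (-1) * ((z - x b) * 1)) =
        divided_difference x S (\<lambda>z. (x b - x a) * 1 + 0 * 1)"
      by (rule arg_cong[where f = "divided_difference x S"]) (auto simp: algebra_simps)
    ultimately have "(x b - x a) * divided_difference x S (\<lambda>z. 1) = 0"
      using divided_difference_mult_node_factor[OF less.prems ab(1), of "\<lambda>z. 1"]
        divided_difference_mult_node_factor[OF less.prems ab(2), of "\<lambda>z. 1"]
      by (simp only: divided_difference_linear)
    with \<open>x b - x a \<noteq> 0\<close> False show ?thesis by simp
  qed
qed

lemma divided_difference_monic:
  assumes "finite S" "inj_on x S" "k \<le> card S"
  shows "divided_difference x S (\<lambda>z. \<Prod>m<k. z - c m) =
    (if k + 1 < card S then 0 else if k + 1 = card S then 1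
     else (\<Sum>i\<in>S. x i) - (\<Sum>m<k. c m))"
  using assms
proof (induction k arbitrary: S)
  case 0
  then have "S = {} \<or> card S \<ge> 1" by (auto simp: Suc_le_eq card_gt_0_iff)
  then show ?case using divided_difference_const_one[OF "0.prems"(1,2)]
    by (auto simp: divided_difference_def)
next
  case (Suc k)
  then obtain a where a: "a \<in> S" by fastforce
  have rest: "finite (S - {a})" "inj_on x (S - {a})" "k \<le> card (S - {a})"
    using Suc.prems a inj_on_diff by auto
  have card_rest: "card (S - {a}) = card S - 1" using a Suc.prems(1) by simp
  have "divided_difference x S (\<lambda>z. \<Prod>m<Suc k. z - c m) =
     divided_difference x S
       (\<lambda>z. 1 * ((z - x a) * (\<Prod>m<k. z - c m)) + (x a - c k) * (\<Prod>m<k. z - c m))"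
    by (rule arg_cong[where f = "divided_difference x S"]) (simp add: algebra_simps)
  also have "\<dots> = divided_difference x (S - {a}) (\<lambda>z. \<Prod>m<k. z - c m) +
      (x a - c k) * divided_difference x S (\<lambda>z. \<Prod>m<k. z - c m)"
    by (simp only: divided_difference_linear divided_difference_mult_node_factor[OF Suc.prems(1,2) a])
  also have "\<dots> = (if Suc k + 1 < card S then 0 else if Suc k + 1 = card S then 1
      else (\<Sum>i\<in>S. x i) - (\<Sum>m<Suc k. c m))"
  proof -
    have split_sum: "(\<Sum>i\<in>S. x i) = x a + (\<Sum>i\<in>S - {a}. x i)"
      using sum.remove[OF Suc.prems(1) a] .
    consider "Suc k + 1 < card S" | "Suc k + 1 = card S" | "Suc k = card S"
      using Suc.prems(3) by linarith
    then show ?thesis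
    proof cases
      case 1
      then show ?thesis using Suc.IH[OF rest] Suc.IH[OF Suc.prems(1,2)] card_rest by simp
    next
      case 2
      then show ?thesis using Suc.IH[OF rest] Suc.IH[OF Suc.prems(1,2)] card_rest by simp
    next
      case 3
      then have "divided_difference x (S - {a}) (\<lambda>z. \<Prod>m<k. z - c m) =
          (\<Sum>i\<in>S - {a}. x i) - (\<Sum>m<k. c m)"
        and "divided_difference x S (\<lambda>z. \<Prod>m<k. z - c m) = 1"
        using Suc.IH[OF rest] Suc.IH[OF Suc.prems(1,2)] card_rest by auto
      then show ?thesis using 3[symmetric] split_sum by simp
    qed
  qed
  finally show ?case .
qed

lemma sum_prod_shifted_ratios:
  fixes x :: "'i \<Rightarrow> real"
  assumes "finite S" "inj_on x S"
  shows "(\<Sum>i\<in>S. \<Prod>j\<in>S - {i}. (x i - x j - q) / (x i - x j)) = real (card S)"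
proof (cases "q = 0")
  case True
  have "(\<Prod>j\<in>S - {i}. (x i - x j - q) / (x i - x j)) = 1" if "i \<in> S" for i
    using that assms(2) True by (intro prod.neutral) (auto dest: inj_onD)
  then show ?thesis by simp
next
  case False
  obtain e where e: "bij_betw e {..<card S} S"
    using assms(1) bij_betw_from_nat_into_finite by blast
  define c where "c m = x (e m) + q" for m
  have roots: "(\<Prod>m<card S. z - c m) = (\<Prod>j\<in>S. z - x j - q)" for z
    unfolding c_def using prod.reindex_bij_betw[OF e, of "\<lambda>j. z - x j - q"] by (simp add: algebra_simps)
  have root_sum: "(\<Sum>m<card S. c m) = (\<Sum>j\<in>S. x j) + real (card S) * q"
    unfolding c_def using sum.reindex_bij_betw[OF e, of x] by (simp add: sum.distrib)
  have "divided_difference x S (\<lambda>z. \<Prod>m<card S. z - c m) = - (real (card S) * q)"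
    using divided_difference_monic[OF assms, of "card S" c] root_sum by simp
  moreover have "divided_difference x S (\<lambda>z. \<Prod>m<card S. z - c m) =
      - q * (\<Sum>i\<in>S. \<Prod>j\<in>S - {i}. (x i - x j - q) / (x i - x j))"
    unfolding divided_difference_def roots sum_distrib_left
  proof (rule sum.cong)
    fix i assume "i \<in> S"
    then have "(\<Prod>j\<in>S. x i - x j - q) = - q * (\<Prod>j\<in>S - {i}. x i - x j - q)"
      using assms(1) by (subst prod.remove[of _ i]) auto
    then show "(\<Prod>j\<in>S. x i - x j - q) / (\<Prod>j\<in>S - {i}. x i - x j) =
        - q * (\<Prod>j\<in>S - {i}. (x i - x j - q) / (x i - x j))"
      by (simp add: prod_dividef)
  qed simp
  ultimately show ?thesis using False by simp
qed

lemma prob_space_point_masses: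
  fixes w :: "'i \<Rightarrow> real" and p :: "'i \<Rightarrow> 'a"
  assumes "\<And>i. i \<in> I \<Longrightarrow> 0 \<le> w i" and "(\<Sum>i\<in>I. w i) = 1"
  shows "prob_space (measure_of UNIV UNIV (\<lambda>A. ennreal (\<Sum>i\<in>I. w i * indicator A (p i))))"
proof -
  let ?\<mu> = "\<lambda>A. ennreal (\<Sum>i\<in>I. w i * indicator A (p i))"
  have \<mu>: "?\<mu> A = (\<Sum>i\<in>I. ennreal (w i) * indicator A (p i))" for A
  proof -
    have "?\<mu> A = (\<Sum>i\<in>I. ennreal (w i * indicator A (p i)))"
      using assms(1) by (intro sum_ennreal[symmetric]) auto
    also have "\<dots> = (\<Sum>i\<in>I. ennreal (w i) * indicator A (p i))"
      by (intro sum.cong) (auto simp: indicator_def)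
    finally show ?thesis .
  qed
  have "countably_additive UNIV ?\<mu>"
  proof (rule countably_additiveI)
    fix A :: "nat \<Rightarrow> 'a set" assume "disjoint_family A"
    then show "(\<Sum>n. ?\<mu> (A n)) = ?\<mu> (\<Union>n. A n)"
      unfolding \<mu> by (subst suminf_sum[OF summableI])
        (simp add: suminf_indicator)
  qed
  moreover have "positive UNIV ?\<mu>" by (simp add: positive_def)
  moreover have "sigma_algebra (UNIV :: 'a set) UNIV"
    using sigma_algebra_Pow[of "UNIV :: 'a set"] by simp
  ultimately show ?thesis
    using assms(2) by (intro prob_spaceI) (simp add: space_measure_of_conv emeasure_measure_of_sigma)
qed

lemma signature_shifted_gap:
  assumes "signature N lam" "i \<in> {1..N}" "j \<in> {1..N}" "i \<noteq> j"
  shows "\<bar>shifted lam i - shifted lam j\<bar> \<ge> 1"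
proof -
  have "\<bar>(lam i - int i) - (lam j - int j)\<bar> \<ge> 1"
  proof (cases "i < j")
    case True
    then have "lam j \<le> lam i" using assms unfolding signature_def by auto
    with True show ?thesis by linarith
  next
    case False
    then have "lam i \<le> lam j" using assms unfolding signature_def by auto
    with False assms(4) show ?thesis by linarith
  qed
  then have "\<bar>real_of_int ((lam i - int i) - (lam j - int j))\<bar> \<ge> 1"
    by (metis of_int_1 of_int_abs of_int_le_iff)
  then show ?thesis unfolding shifted_def by simp
qed

lemma inj_on_shifted:
  assumes "signature N lam"
  shows "inj_on (shifted lam) {1..N}"
proof (rule inj_onI, rule ccontr)
  fix i j assume "i \<in> {1..N}" "j \<in> {1..N}" "shifted lam i = shifted lam j" "i \<noteq> j"
  then show False using signature_shifted_gap[OF assms, of i j] by simp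
qed

lemma sum_pp_weight:
  assumes "signature N lam"
  shows "(\<Sum>i=1..N. pp_weight N q lam i) = real N"
  unfolding pp_weight_def using sum_prod_shifted_ratios[OF _ inj_on_shifted[OF assms]] by simp

lemma pp_weight_nonneg:
  assumes "signature N lam" "q \<in> {-1..1}" "i \<in> {1..N}"
  shows "0 \<le> pp_weight N q lam i"
  unfolding pp_weight_def
proof (rule prod_nonneg)
  fix j assume "j \<in> {1..N} - {i}"
  then have gap: "\<bar>shifted lam i - shifted lam j\<bar> \<ge> 1"
    using signature_shifted_gap[OF assms(1,3)] by blast
  show "0 \<le> (shifted lam i - shifted lam j - q) / (shifted lam i - shifted lam j)"
    using assms(2) gap by (cases "shifted lam i - shifted lam j > 0")
      (auto intro: divide_nonneg_pos divide_nonpos_neg)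
qed

theorem mainTheorem3:
  fixes N :: nat and lam :: "nat \<Rightarrow> int" and q :: real
  assumes "N \<ge> 1" and "signature N lam"
  shows "m_PP N q lam UNIV = 1 \<and>
         (q \<in> {-1..1} \<longrightarrow>
           (\<forall>A. 0 \<le> m_PP N q lam A) \<and>
           prob_space (measure_of UNIV UNIV (\<lambda>A. ennreal (m_PP N q lam A))))"
proof (intro conjI impI)
  define w where "w i = pp_weight N q lam i / real N" for i
  have m_PP_eq: "m_PP N q lam A = (\<Sum>i=1..N. w i * indicator A (pp_atom N lam i))" for A
    unfolding m_PP_def w_def sum_distrib_left by simp
  have total: "(\<Sum>i=1..N. w i) = 1"
    unfolding w_def using sum_pp_weight[OF assms(2)] assms(1) by (simp add: sum_divide_distrib[symmetric])
  then show "m_PP N q lam UNIV = 1" unfolding m_PP_eq by simp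
  assume "q \<in> {-1..1}"
  then have w_nonneg: "i \<in> {1..N} \<Longrightarrow> 0 \<le> w i" for i
    unfolding w_def using pp_weight_nonneg[OF assms(2)] by simp
  then show "\<forall>A. 0 \<le> m_PP N q lam A" unfolding m_PP_eq by (auto intro!: sum_nonneg)
  show "prob_space (measure_of UNIV UNIV (\<lambda>A. ennreal (m_PP N q lam A)))"
    unfolding m_PP_eq using prob_space_point_masses[OF w_nonneg total] by simp
qed

end
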